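(* Let $N\ge 5$ be odd and let $A$ be a compressible arrangement in the $N\times N$ square. Then $A$ is an acyclic polyomino if and only if its compression $C(A)$ is an acyclic polyomino each of whose holes has area one.
   Context: An arrangement in a rectangle is a choice of which unit squares (spaces) of the rectangle are filled with tiles; a polyomino is a finite union of closed unit tiles, meeting only in whole edges, with connected interior; its holes are the bounded components of the complement, the area of a hole is the number of unit squares filling it, and it is acyclic if its dual graph (tiles, adjacency along edges) is a tree. For the $N\times N$ square, its boundary layer is the outermost ring of spaces; $D_1$ denotes the boundary arrangement in which all ring spaces except the four corners are filled, $D_2$ the one with all ring spaces filled except exactly one corner. Index the interior $(N-2)\times(N-2)$ spaces by $(i,j)$, $1\le i,j\le N-2$, from the top-left; $W$ = spaces with $i+j$ even, $B$ = spaces with $i+j$ odd. For odd $N$, $P_N$ is the partial arrangement of the interior in which every space of $B$ is filled and every space $(i,j)$ with $i,j$ both odd is empty; the remaining spaces, $(i,j)$ with $i,j$ both even, form the $\frac{N-3}{2}\times\frac{N-3}{2}$ grid $U_N$. An arrangement $A$ in the $N\times N$ square is compressible if its boundary-layer part $D$ satisfies $D_1\subseteq D\subseteq D_2$ and its interior agrees with $P_N$; its compression $C(A)$ is the arrangement in the $\frac{N+1}{2}\times\frac{N+1}{2}$ square with the same boundary $D$ (placed at the corresponding positions) and whose interior space $(a,b)$ is filled iff space $(2a,2b)$ of $U_N$ is filled in $A$. *)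

theory Defs
  imports "HOL-Analysis.Analysis"
begin

text \<open>Spaces (unit squares) are indexed by pairs (i,j) of naturals; in the N x N square
  0 \<le> i,j < N, i = row (from the top), j = column (from the left).  The interior space
  with paper index (i,j), 1 \<le> i,j \<le> N-2, is exactly the space (i,j) here.
  An arrangement is a set of spaces (the filled ones).\<close>

type_synonym space = "nat \<times> nat"

definition square :: "nat \<Rightarrow> space set" where
  "square N = {(i,j). i < N \<and> j < N}"

definition is_arrangement :: "nat \<Rightarrow> space set \<Rightarrow> bool" where
  "is_arrangement N A \<longleftrightarrow> A \<subseteq> square N"

definition tile :: "space \<Rightarrow> (real \<times> real) set" where
  "tile c = cbox (real (fst c), real (snd c)) (real (fst c) + 1, real (snd c) + 1)"

definition open_cell :: "space \<Rightarrow> (real \<times> real) set" where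
  "open_cell c = box (real (fst c), real (snd c)) (real (fst c) + 1, real (snd c) + 1)"

definition region :: "space set \<Rightarrow> (real \<times> real) set" where
  "region A = \<Union> (tile ` A)"

text \<open>A polyomino: a (nonempty, finite) union of closed unit tiles with connected interior.
  Grid tiles automatically meet only along edges or corners and never overlap.\<close>

definition polyomino :: "space set \<Rightarrow> bool" where
  "polyomino A \<longleftrightarrow> finite A \<and> A \<noteq> {} \<and> connected (interior (region A))"

definition holes :: "space set \<Rightarrow> (real \<times> real) set set" where
  "holes A = {H \<in> components (- region A). bounded H}"

definition hole_area :: "(real \<times> real) set \<Rightarrow> nat" where
  "hole_area H = card {c :: space. open_cell c \<subseteq> H}"

definition adj :: "space \<Rightarrow> space \<Rightarrow> bool" where
  "adj c d \<longleftrightarrow>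
     (fst c = fst d \<and> (snd c = snd d + 1 \<or> snd d = snd c + 1)) \<or>
     (snd c = snd d \<and> (fst c = fst d + 1 \<or> fst d = fst c + 1))"

definition dual_edges :: "space set \<Rightarrow> space rel" where
  "dual_edges A = {(c,d). c \<in> A \<and> d \<in> A \<and> adj c d}"

definition dual_connected :: "space set \<Rightarrow> bool" where
  "dual_connected A \<longleftrightarrow> (\<forall>c\<in>A. \<forall>d\<in>A. (c,d) \<in> (dual_edges A)\<^sup>*)"

definition has_dual_cycle :: "space set \<Rightarrow> bool" where
  "has_dual_cycle A \<longleftrightarrow> (\<exists>xs. length xs \<ge> 3 \<and> distinct xs \<and> set xs \<subseteq> A \<and>
      (\<forall>k < length xs. adj (xs ! k) (xs ! ((k + 1) mod length xs))))"

definition acyclic_arr :: "space set \<Rightarrow> bool" where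
  "acyclic_arr A \<longleftrightarrow> dual_connected A \<and> \<not> has_dual_cycle A"

definition acyclic_polyomino :: "space set \<Rightarrow> bool" where
  "acyclic_polyomino A \<longleftrightarrow> polyomino A \<and> acyclic_arr A"

definition ring :: "nat \<Rightarrow> space set" where
  "ring N = {(i,j) \<in> square N. i = 0 \<or> j = 0 \<or> i = N - 1 \<or> j = N - 1}"

definition corners :: "nat \<Rightarrow> space set" where
  "corners N = {(0,0), (0, N - 1), (N - 1, 0), (N - 1, N - 1)}"

definition D1 :: "nat \<Rightarrow> space set" where
  "D1 N = ring N - corners N"

definition interior_sq :: "nat \<Rightarrow> space set" where
  "interior_sq N = {(i,j). 1 \<le> i \<and> i \<le> N - 2 \<and> 1 \<le> j \<and> j \<le> N - 2}"

text \<open>Compressible: boundary part D with D_1 \<subseteq> D \<subseteq> D_2 for some D_2 (all ring spaces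
  except exactly one corner), interior agreeing with P_N (all spaces of B filled, all
  spaces with both indices odd empty).\<close>

definition compressible :: "nat \<Rightarrow> space set \<Rightarrow> bool" where
  "compressible N A \<longleftrightarrow> is_arrangement N A \<and>
     D1 N \<subseteq> A \<and>
     (\<exists>c \<in> corners N. A \<inter> ring N \<subseteq> ring N - {c}) \<and>
     (\<forall>(i,j) \<in> interior_sq N. odd (i + j) \<longrightarrow> (i,j) \<in> A) \<and>
     (\<forall>(i,j) \<in> interior_sq N. odd i \<and> odd j \<longrightarrow> (i,j) \<notin> A)"

text \<open>Compression into the M x M square, M = (N+1)/2: same boundary (non-corner ring spaces
  filled, a corner filled iff the corresponding corner of the N-square is in A; corners
  correspond via (a,b) \<mapsto> (2a,2b), since 2(M-1) = N-1), interior space (a,b) filled iff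
  space (2a,2b) of U_N is filled in A.\<close>

definition compression :: "nat \<Rightarrow> space set \<Rightarrow> space set" where
  "compression N A =
     (let M = (N + 1) div 2 in
       {(a,b). (a,b) \<in> D1 M
             \<or> ((a,b) \<in> corners M \<and> (2 * a, 2 * b) \<in> A)
             \<or> ((a,b) \<in> interior_sq M \<and> (2 * a, 2 * b) \<in> A)})"

end

theory Submission
  imports Defs
begin

text \<open>A compressible arrangement A is the decompression of C = C(A): the space (a, b) of C sits
  at (2a, 2b), and every odd space of A is filled and lies between two adjacent spaces of the
  small square.  So the dual graph of A is that of C with every edge subdivided, plus a pendant
  tile for each pair of adjacent spaces exactly one of which is in C, plus an isolated tile for
  each pair of adjacent gaps of C.  Subdivision preserves connectivity and cycles, hence A is a
  tree iff C is a tree without adjacent gaps.  As D_1 frames C, having no adjacent gaps means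
  exactly that every hole is one unit square: two adjacent gaps form a bounded component of
  area at least two, a lone interior gap is sealed by its four neighbours, and an empty corner
  opens to the outside.  Finally, dual connectivity already makes the interior connected.\<close>

lemma mem_box_Pair:
  "((x::real), (y::real)) \<in> box (a, b) (c, d) \<longleftrightarrow> a < x \<and> x < c \<and> b < y \<and> y < d"
  by (auto simp: mem_box Basis_prod_def)

lemma mem_tile:
  "(x, y) \<in> tile c \<longleftrightarrow>
     real (fst c) \<le> x \<and> x \<le> real (fst c) + 1 \<and> real (snd c) \<le> y \<and> y \<le> real (snd c) + 1"
  by (simp add: tile_def)

lemma mem_open_cell:
  "(x, y) \<in> open_cell c \<longleftrightarrow>
     real (fst c) < x \<and> x < real (fst c) + 1 \<and> real (snd c) < y \<and> y < real (snd c) + 1"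
  by (simp add: open_cell_def mem_box_Pair)

lemma closure_open_cell: "closure (open_cell c) = tile c"
  unfolding open_cell_def tile_def
  by (subst closure_box) (auto simp: box_eq_empty Basis_prod_def)

lemma open_cell_subset_tile: "open_cell c \<subseteq> tile c"
  using closure_subset closure_open_cell by blast

lemma open_open_cell: "open (open_cell c)"
  unfolding open_cell_def by (rule open_box)

lemma connected_open_cell: "connected (open_cell c)"
  unfolding open_cell_def by (simp add: convex_connected)

definition centre :: "space \<Rightarrow> real \<times> real" where
  "centre c = (real (fst c) + 1/2, real (snd c) + 1/2)"

lemma centre_in_open_cell: "centre c \<in> open_cell c"
  by (simp add: centre_def mem_open_cell)

lemma real_less_plus_one_iff: "real m < real n + 1 \<longleftrightarrow> m \<le> n"
  by (metis of_nat_Suc of_nat_less_iff less_Suc_eq_le add.commute)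

lemma open_cell_meets_tile:
  assumes "open_cell c \<inter> tile e \<noteq> {}"
  shows "e = c"
proof -
  obtain x y where "(x, y) \<in> open_cell c" "(x, y) \<in> tile e"
    using assms by auto
  then have "real (fst c) < real (fst e) + 1" "real (fst e) < real (fst c) + 1"
    "real (snd c) < real (snd e) + 1" "real (snd e) < real (snd c) + 1"
    unfolding mem_tile mem_open_cell by linarith+
  then show ?thesis
    by (simp add: real_less_plus_one_iff prod_eq_iff)
qed

lemma open_cell_subset_open_cell_iff: "open_cell d \<subseteq> open_cell c \<longleftrightarrow> d = c"
  using open_cell_meets_tile[of c d] centre_in_open_cell[of d] open_cell_subset_tile[of d] by blast

definition domino :: "space \<Rightarrow> space \<Rightarrow> (real \<times> real) set" where
  "domino c d = box (real (min (fst c) (fst d)), real (min (snd c) (snd d)))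
                    (real (max (fst c) (fst d)) + 1, real (max (snd c) (snd d)) + 1)"

lemma connected_domino: "connected (domino c d)"
  unfolding domino_def by (simp add: convex_connected)

lemma open_domino: "open (domino c d)"
  unfolding domino_def by (rule open_box)

lemma domino_subset_tiles:
  assumes "adj c d"
  shows "domino c d \<subseteq> tile c \<union> tile d"
proof
  fix p assume "p \<in> domino c d"
  with assms show "p \<in> tile c \<union> tile d"
    by (cases p, cases c, cases d)
       (auto simp: domino_def adj_def of_nat_max of_nat_min mem_box_Pair mem_tile)
qed

lemma open_cells_subset_domino:
  assumes "adj c d"
  shows "open_cell c \<union> open_cell d \<subseteq> domino c d"
proof
  fix p assume "p \<in> open_cell c \<union> open_cell d"
  with assms show "p \<in> domino c d"
    by (cases p, cases c, cases d)
       (auto simp: domino_def adj_def of_nat_max of_nat_min mem_box_Pair mem_open_cell)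
qed

lemma tile_meets_domino:
  assumes "adj u v" "tile c \<inter> domino u v \<noteq> {}"
  shows "c = u \<or> c = v"
proof -
  obtain x y where xy: "(x, y) \<in> tile c" "(x, y) \<in> domino u v"
    using assms(2) by auto
  have "real (min (fst u) (fst v)) < real (fst c) + 1" "real (fst c) < real (max (fst u) (fst v)) + 1"
    "real (min (snd u) (snd v)) < real (snd c) + 1" "real (snd c) < real (max (snd u) (snd v)) + 1"
    using xy unfolding mem_tile domino_def mem_box_Pair by linarith+
  then have "min (fst u) (fst v) \<le> fst c" "fst c \<le> max (fst u) (fst v)"
    "min (snd u) (snd v) \<le> snd c" "snd c \<le> max (snd u) (snd v)"
    by (simp_all only: real_less_plus_one_iff)
  with assms(1) show ?thesis
    unfolding adj_def prod_eq_iff by (simp add: min_def max_def split: if_splits; arith)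
qed

subsection \<open>Connected interior\<close>

definition dual_interior :: "space set \<Rightarrow> (real \<times> real) set" where
  "dual_interior X = (\<Union>c\<in>X. open_cell c) \<union> (\<Union>(c, d)\<in>dual_edges X. domino c d)"

lemma dual_interior_subset_interior_region: "dual_interior X \<subseteq> interior (region X)"
proof (rule interior_maximal)
  show "open (dual_interior X)"
    unfolding dual_interior_def
    by (intro open_Un open_UN ballI) (auto simp: open_open_cell open_domino)
  have "domino c d \<subseteq> region X" if "(c, d) \<in> dual_edges X" for c d
    using that domino_subset_tiles unfolding dual_edges_def region_def by blast
  moreover have "open_cell c \<subseteq> region X" if "c \<in> X" for c
    using that open_cell_subset_tile unfolding region_def by blast
  ultimately show "dual_interior X \<subseteq> region X"
    unfolding dual_interior_def by blast
qed

lemma region_subset_closure_dual_interior: "region X \<subseteq> closure (dual_interior X)"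
proof -
  have "tile c \<subseteq> closure (dual_interior X)" if "c \<in> X" for c
    using that closure_mono[of "open_cell c" "dual_interior X"]
    unfolding closure_open_cell dual_interior_def by blast
  then show ?thesis
    unfolding region_def by blast
qed

lemma open_cell_subset_dual_interior: "c \<in> X \<Longrightarrow> open_cell c \<subseteq> dual_interior X"
  unfolding dual_interior_def by blast

lemma domino_subset_dual_interior: "(c, d) \<in> dual_edges X \<Longrightarrow> domino c d \<subseteq> dual_interior X"
  unfolding dual_interior_def by blast

lemma connected_component_centre_domino:
  assumes "adj c d" "domino c d \<subseteq> S" "p \<in> domino c d"
  shows "connected_component S p (centre c)"
  unfolding connected_component_def
  using assms connected_domino centre_in_open_cell open_cells_subset_domino[OF assms(1)] by blast

lemma connected_component_dual_interior_centres:
  assumes "(c, d) \<in> (dual_edges X)\<^sup>*" "c \<in> X"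
  shows "connected_component (dual_interior X) (centre c) (centre d)"
  using assms(1)
proof (induction rule: rtrancl_induct)
  case base
  show ?case
    using connected_component_refl open_cell_subset_dual_interior[OF assms(2)] centre_in_open_cell
    by blast
next
  case (step d e)
  have "adj d e"
    using step.hyps(2) unfolding dual_edges_def by auto
  moreover have "centre e \<in> domino d e"
    using open_cells_subset_domino[OF \<open>adj d e\<close>] centre_in_open_cell by blast
  ultimately have "connected_component (dual_interior X) (centre e) (centre d)"
    using connected_component_centre_domino domino_subset_dual_interior[OF step.hyps(2)] by blast
  with step.IH show ?case
    using connected_component_sym connected_component_trans by metis
qed

lemma connected_component_dual_interior_centre:
  assumes "p \<in> dual_interior X"
  shows "\<exists>c\<in>X. connected_component (dual_interior X) p (centre c)"
proof -
  from assms consider c where "c \<in> X" "p \<in> open_cell c"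
    | c d where "(c, d) \<in> dual_edges X" "p \<in> domino c d"
    unfolding dual_interior_def by auto
  then show ?thesis
  proof cases
    case 1
    then show ?thesis
      using open_cell_subset_dual_interior centre_in_open_cell connected_open_cell
      unfolding connected_component_def by blast
  next
    case 2
    then show ?thesis
      using connected_component_centre_domino[OF _ domino_subset_dual_interior]
      unfolding dual_edges_def by blast
  qed
qed

lemma connected_dual_interior:
  assumes "dual_connected X"
  shows "connected (dual_interior X)"
  unfolding connected_iff_connected_component
proof (intro ballI)
  fix p q assume "p \<in> dual_interior X" "q \<in> dual_interior X"
  then obtain c d where "c \<in> X" "d \<in> X" "connected_component (dual_interior X) p (centre c)"
    "connected_component (dual_interior X) q (centre d)"
    using connected_component_dual_interior_centre by meson
  moreover have "connected_component (dual_interior X) (centre c) (centre d)"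
    using connected_component_dual_interior_centres assms \<open>c \<in> X\<close> \<open>d \<in> X\<close>
    unfolding dual_connected_def by blast
  ultimately show "connected_component (dual_interior X) p q"
    using connected_component_trans connected_component_sym by metis
qed

lemma dual_connected_imp_polyomino:
  assumes "finite X" "X \<noteq> {}" "dual_connected X"
  shows "polyomino X"
  using assms connected_intermediate_closure[OF connected_dual_interior[OF assms(3)]]
    dual_interior_subset_interior_region region_subset_closure_dual_interior interior_subset
  unfolding polyomino_def by (meson subset_trans)

lemma acyclic_polyomino_iff_acyclic_arr:
  assumes "finite X" "X \<noteq> {}"
  shows "acyclic_polyomino X \<longleftrightarrow> acyclic_arr X"
  using dual_connected_imp_polyomino[OF assms]
  unfolding acyclic_polyomino_def acyclic_arr_def by blast

subsection \<open>Holes\<close>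

lemma unit_interval_cover:
  fixes y :: real
  assumes "real a \<le> y" "y \<le> real b" "a < b"
  shows "\<exists>j. a \<le> j \<and> j < b \<and> real j \<le> y \<and> y \<le> real j + 1"
proof (cases "y < real b")
  case True
  have "y \<ge> 0"
    using assms(1) by linarith
  with assms(1) True show ?thesis
    by (intro exI[of _ "nat \<lfloor>y\<rfloor>"])
       (auto simp: le_nat_floor nat_less_iff floor_less_iff intro: of_nat_floor)
next
  case False
  with assms show ?thesis
    by (intro exI[of _ "b - 1"]) auto
qed

lemma region_subset_cbox:
  assumes "C \<subseteq> square M"
  shows "region C \<subseteq> cbox (0, 0) (real M, real M)"
proof
  fix p assume "p \<in> region C"
  then obtain c where c: "c \<in> C" "p \<in> tile c"
    unfolding region_def by blast
  then have "real (fst c) + 1 \<le> real M" "real (snd c) + 1 \<le> real M"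
    using assms unfolding square_def by (auto simp flip: of_nat_Suc)
  with c(2) show "p \<in> cbox (0, 0) (real M, real M)"
    by (cases p) (auto simp: mem_tile)
qed

lemma cbox_subset_tiles:
  assumes "p \<in> cbox (0, 0) (real M, real M)" "0 < M"
  shows "\<exists>c\<in>square M. p \<in> tile c"
proof -
  obtain x y where p: "p = (x, y)"
    by (cases p)
  obtain i where "i < M" "real i \<le> x" "x \<le> real i + 1"
    using unit_interval_cover[of 0 x M] assms unfolding p by auto
  moreover obtain j where "j < M" "real j \<le> y" "y \<le> real j + 1"
    using unit_interval_cover[of 0 y M] assms unfolding p by auto
  ultimately show ?thesis
    unfolding p by (intro bexI[of _ "(i, j)"]) (auto simp: mem_tile square_def)
qed

lemma frame_subset_region:
  assumes "M \<ge> 3" "D1 M \<subseteq> C"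
  shows "cbox (1, 1) (real M - 1, real M - 1) - box (1, 1) (real M - 1, real M - 1) \<subseteq> region C"
proof
  fix z assume z: "z \<in> cbox (1, 1) (real M - 1, real M - 1) - box (1, 1) (real M - 1, real M - 1)"
  obtain x y where xy: "z = (x, y)"
    by (cases z)
  have bounds: "1 \<le> x" "x \<le> real (M - 1)" "1 \<le> y" "y \<le> real (M - 1)"
    using z assms(1) unfolding xy by (auto simp: of_nat_diff)
  have edge: "x = 1 \<or> x = real (M - 1) \<or> y = 1 \<or> y = real (M - 1)"
    using z assms(1) unfolding xy by (auto simp: of_nat_diff mem_box_Pair)
  have "\<exists>i. 1 \<le> i \<and> i < M - 1 \<and> real i \<le> x \<and> x \<le> real i + 1"
    by (rule unit_interval_cover) (use bounds assms(1) in auto)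
  then obtain i where i: "1 \<le> i" "i < M - 1" "real i \<le> x" "x \<le> real i + 1"
    by blast
  have "\<exists>j. 1 \<le> j \<and> j < M - 1 \<and> real j \<le> y \<and> y \<le> real j + 1"
    by (rule unit_interval_cover) (use bounds assms(1) in auto)
  then obtain j where j: "1 \<le> j" "j < M - 1" "real j \<le> y" "y \<le> real j + 1"
    by blast
  have "(0, j) \<in> C" "(M - 1, j) \<in> C" "(i, 0) \<in> C" "(i, M - 1) \<in> C"
    using i(1,2) j(1,2) assms unfolding D1_def ring_def corners_def square_def by auto
  moreover from edge i j
  have "z \<in> tile (0, j) \<or> z \<in> tile (M - 1, j) \<or> z \<in> tile (i, 0) \<or> z \<in> tile (i, M - 1)"
    unfolding xy mem_tile by auto
  ultimately show "z \<in> region C"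
    unfolding region_def by blast
qed

lemma connected_component_trapped:
  assumes "open U" "closed K" "U \<subseteq> K" "K - U \<subseteq> R" "p \<in> U"
  shows "connected_component_set (- R) p \<subseteq> U"
proof -
  let ?H = "connected_component_set (- R) p"
  have "?H \<subseteq> U \<union> - K" "U \<inter> - K \<inter> ?H = {}"
    using assms(3,4) connected_component_subset[of "- R" p] by blast+
  then have "U \<inter> ?H = {} \<or> - K \<inter> ?H = {}"
    using connectedD[OF connected_connected_component] assms(1,2) by (metis open_Compl)
  moreover have "?H = {} \<or> p \<in> U \<inter> ?H"
    using assms(5) by (auto simp: connected_component_refl_eq dest: connected_component_in)
  ultimately show ?thesis
    using \<open>?H \<subseteq> U \<union> - K\<close> by blast
qed

definition no_adjacent_gaps :: "nat \<Rightarrow> space set \<Rightarrow> bool" where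
  "no_adjacent_gaps M C \<longleftrightarrow> (\<forall>u\<in>square M. \<forall>v\<in>square M. adj u v \<longrightarrow> u \<in> C \<or> v \<in> C)"

lemma interior_sq_if_not_in_ring: "u \<in> square M \<Longrightarrow> u \<notin> ring M \<Longrightarrow> u \<in> interior_sq M"
  unfolding square_def ring_def interior_sq_def by (cases u) auto

lemma gap_cases:
  assumes "u \<in> square M" "u \<notin> C" "D1 M \<subseteq> C"
  shows "u \<in> corners M \<or> u \<in> interior_sq M"
  using assms interior_sq_if_not_in_ring unfolding D1_def by blast

lemma adj_corner_in_D1:
  assumes "u \<in> corners M" "adj u v" "v \<in> square M" "M \<ge> 3"
  shows "v \<in> D1 M"
  using assms unfolding corners_def adj_def D1_def ring_def square_def
  by (cases u; cases v) auto

lemma adjacent_gaps_interior: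
  assumes "M \<ge> 3" "D1 M \<subseteq> C" "u \<in> square M" "v \<in> square M" "adj u v" "u \<notin> C" "v \<notin> C"
  shows "u \<in> interior_sq M"
  using assms gap_cases adj_corner_in_D1 by (metis subsetD)

lemma hole_eq_connected_component:
  assumes "H \<in> holes C" "p \<in> H"
  shows "H = connected_component_set (- region C) p" "p \<notin> region C"
proof -
  obtain q where "H = connected_component_set (- region C) q"
    using assms(1) unfolding holes_def components_iff by blast
  with assms(2) show H: "H = connected_component_set (- region C) p"
    using connected_component_eq by blast
  show "p \<notin> region C"
    using assms(2) connected_component_subset unfolding H by blast
qed

lemma no_adjacent_gaps_if_unit_holes:
  assumes "M \<ge> 3" "D1 M \<subseteq> C" and unit: "\<forall>H\<in>holes C. hole_area H = 1"
  shows "no_adjacent_gaps M C"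
  unfolding no_adjacent_gaps_def
proof (intro ballI impI, rule ccontr)
  fix u v assume u: "u \<in> square M" and v: "v \<in> square M" and a: "adj u v"
    and gaps: "\<not> (u \<in> C \<or> v \<in> C)"
  let ?R = "region C" and ?B = "box (1, 1) (real M - 1, real M - 1)"
  let ?H = "connected_component_set (- ?R) (centre u)"
  have cells: "open_cell u \<subseteq> domino u v" "open_cell v \<subseteq> domino u v"
    using open_cells_subset_domino[OF a] by auto
  have "u \<in> interior_sq M"
    using adjacent_gaps_interior[OF assms(1,2) u v a] gaps by blast
  then have "centre u \<in> ?B"
    by (cases u) (auto simp: interior_sq_def centre_def mem_box_Pair)
  then have "?H \<subseteq> ?B"
    by (rule connected_component_trapped[OF open_box closed_cbox box_subset_cbox
        frame_subset_region[OF assms(1,2)]])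
  then have "bounded ?H"
    using bounded_box bounded_subset by blast
  have "domino u v \<subseteq> - ?R"
    using tile_meets_domino[OF a] gaps unfolding region_def by blast
  moreover have "centre u \<in> domino u v"
    using cells(1) centre_in_open_cell by blast
  ultimately have "domino u v \<subseteq> ?H" "centre u \<in> - ?R"
    using connected_component_maximal[OF _ connected_domino] by blast+
  then have "?H \<in> holes C"
    using \<open>bounded ?H\<close> unfolding holes_def components_iff by blast
  then have "card {c. open_cell c \<subseteq> ?H} = 1"
    using unit unfolding hole_area_def by blast
  moreover have "u \<in> {c. open_cell c \<subseteq> ?H}" "v \<in> {c. open_cell c \<subseteq> ?H}"
    using \<open>domino u v \<subseteq> ?H\<close> cells by auto
  moreover have "u \<noteq> v"
    using a unfolding adj_def by auto
  ultimately show False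
    by (metis card_1_singletonE singletonD)
qed

lemma hole_subset_cbox:
  assumes "C \<subseteq> square M" "H \<in> holes C"
  shows "H \<subseteq> cbox (0, 0) (real M, real M)"
proof
  let ?Q = "cbox (0::real, 0::real) (real M, real M)"
  fix q assume "q \<in> H"
  show "q \<in> ?Q"
  proof (rule ccontr)
    assume "q \<notin> ?Q"
    have "connected (- ?Q)"
      by (rule connected_complement_bounded_convex) (auto simp: DIM_prod)
    moreover have "- ?Q \<subseteq> - region C"
      using region_subset_cbox[OF assms(1)] by blast
    ultimately have "- ?Q \<subseteq> H"
      using hole_eq_connected_component[OF assms(2) \<open>q \<in> H\<close>] \<open>q \<notin> ?Q\<close>
      by (metis ComplI connected_component_maximal)
    moreover have "bounded H"
      using assms(2) unfolding holes_def by blast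
    ultimately have "bounded (?Q \<union> - ?Q)"
      using bounded_cbox bounded_Un bounded_subset by metis
    then show False
      by simp
  qed
qed

definition corner_direction :: "space \<Rightarrow> real \<times> real" where
  "corner_direction c = (if fst c = 0 then -1 else 1, if snd c = 0 then -1 else 1)"

lemma outward_coordinate:
  fixes x t :: real
  assumes "k = 0 \<or> k = M - 1" "j < M" "real k \<le> x" "x \<le> real k + 1" "0 < t"
    "real j \<le> x + t * (if k = 0 then -1 else 1)" "x + t * (if k = 0 then -1 else 1) \<le> real j + 1"
  shows "j = k"
proof (cases "k = 0")
  case True
  then have "real j < 1"
    using assms(4-6) by simp
  with True show ?thesis
    by simp
next
  case False
  then have "k = M - 1" "real k < real j + 1"
    using assms(1,3,5,7) by auto
  with assms(2) show ?thesis
    by (simp add: real_less_plus_one_iff)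
qed

lemma corner_ray_outside_region:
  assumes "C \<subseteq> square M" "c \<in> corners M" "c \<notin> C" "p \<in> tile c" "p \<notin> region C" "0 \<le> t"
  shows "p + t *\<^sub>R corner_direction c \<notin> region C"
proof
  assume "p + t *\<^sub>R corner_direction c \<in> region C"
  then obtain e where e: "e \<in> C" "p + t *\<^sub>R corner_direction c \<in> tile e"
    unfolding region_def by blast
  show False
  proof (cases "t = 0")
    case True
    then show False
      using e assms(5) unfolding region_def by auto
  next
    case False
    obtain x y where p: "p = (x, y)"
      by (cases p)
    have "fst c = 0 \<or> fst c = M - 1" "snd c = 0 \<or> snd c = M - 1"
      using assms(2) unfolding corners_def by auto
    moreover have "fst e < M" "snd e < M"
      using e(1) assms(1) unfolding square_def by auto
    ultimately have "fst e = fst c" "snd e = snd c"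
      using outward_coordinate[of "fst c" M "fst e" x t] outward_coordinate[of "snd c" M "snd e" y t]
        assms(4,6) e(2) False
      unfolding p corner_direction_def by (auto simp: mem_tile)
    then show False
      using e(1) assms(3) by (metis prod.collapse)
  qed
qed

lemma no_hole_meets_empty_corner:
  assumes "C \<subseteq> square M" "c \<in> corners M" "c \<notin> C" "H \<in> holes C"
  shows "H \<inter> tile c = {}"
proof (rule ccontr)
  assume "H \<inter> tile c \<noteq> {}"
  then obtain p where p: "p \<in> H" "p \<in> tile c"
    by blast
  note H = hole_eq_connected_component[OF assms(4) p(1)]
  let ?L = "(\<lambda>t. p + t *\<^sub>R corner_direction c) ` {0..2}"
  have "connected ?L"
    by (intro connected_continuous_image connected_Icc continuous_intros)
  moreover have "?L \<subseteq> - region C"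
    using corner_ray_outside_region[OF assms(1-3) p(2) H(2)] by auto
  moreover have "p \<in> ?L"
    by (rule image_eqI[of _ _ 0]) auto
  ultimately have "?L \<subseteq> H"
    unfolding H(1) by (rule connected_component_maximal[rotated])
  moreover have "p + 2 *\<^sub>R corner_direction c \<in> ?L"
    by (rule image_eqI[of _ _ 2]) auto
  ultimately have "p + 2 *\<^sub>R corner_direction c \<in> cbox (0, 0) (real M, real M)"
    using hole_subset_cbox[OF assms(1,4)] by blast
  moreover obtain x y where "p = (x, y)"
    by (cases p)
  moreover have "fst c = 0 \<or> fst c = M - 1"
    using assms(2) unfolding corners_def by auto
  moreover have "real (fst c) \<le> x" "x \<le> real (fst c) + 1"
    using p(2) \<open>p = (x, y)\<close> by (simp_all add: mem_tile)
  ultimately show False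
    unfolding corner_direction_def by (cases "fst c = 0") (auto simp: of_nat_diff)
qed

lemma tile_minus_open_cell_subset_region:
  assumes "1 \<le> a" "1 \<le> b" "(a - 1, b) \<in> C" "(a + 1, b) \<in> C" "(a, b - 1) \<in> C" "(a, b + 1) \<in> C"
  shows "tile (a, b) - open_cell (a, b) \<subseteq> region C"
proof
  fix z assume z: "z \<in> tile (a, b) - open_cell (a, b)"
  obtain x y where xy: "z = (x, y)"
    by (cases z)
  have "real (a - 1) = real a - 1" "real (b - 1) = real b - 1"
    using assms(1,2) by auto
  with z have "z \<in> tile (a - 1, b) \<or> z \<in> tile (a + 1, b) \<or> z \<in> tile (a, b - 1) \<or> z \<in> tile (a, b + 1)"
    unfolding xy by (auto simp: mem_tile mem_open_cell)
  with assms(3-6) show "z \<in> region C"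
    unfolding region_def by blast
qed

lemma hole_at_interior_gap:
  assumes "no_adjacent_gaps M C" "c \<in> interior_sq M" "c \<notin> C" "H \<in> holes C" "p \<in> H" "p \<in> tile c"
  shows "H = open_cell c"
proof -
  obtain a b where c: "c = (a, b)"
    by (cases c)
  have bounds: "1 \<le> a" "a + 2 \<le> M" "1 \<le> b" "b + 2 \<le> M"
    using assms(2) unfolding c interior_sq_def by auto
  then have "c \<in> square M"
    unfolding c square_def by auto
  then have nb: "v \<in> C" if "v \<in> square M" "adj c v" for v
    using assms(1,3) that unfolding no_adjacent_gaps_def by blast
  have "(a - 1, b) \<in> C" "(a + 1, b) \<in> C" "(a, b - 1) \<in> C" "(a, b + 1) \<in> C"
    by (rule nb; use bounds in \<open>force simp: c square_def adj_def\<close>)+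
  then have frontier: "tile c - open_cell c \<subseteq> region C"
    unfolding c using tile_minus_open_cell_subset_region bounds by blast
  note H = hole_eq_connected_component[OF assms(4,5)]
  have "p \<in> open_cell c"
    using frontier H(2) assms(6) by blast
  have "open_cell c \<subseteq> - region C"
    using open_cell_meets_tile assms(3) unfolding region_def by blast
  then have "open_cell c \<subseteq> H"
    unfolding H(1) using connected_component_maximal[OF \<open>p \<in> open_cell c\<close> connected_open_cell] by blast
  moreover have "closed (tile c)"
    unfolding tile_def by (rule closed_cbox)
  then have "H \<subseteq> open_cell c"
    unfolding H(1) using connected_component_trapped[OF open_open_cell _ open_cell_subset_tile frontier]
      \<open>p \<in> open_cell c\<close> by blast
  ultimately show ?thesis
    by blast
qed

lemma unit_hole_if_no_adjacent_gaps:
  assumes "M \<ge> 3" "C \<subseteq> square M" "D1 M \<subseteq> C" "no_adjacent_gaps M C" "H \<in> holes C"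
  shows "hole_area H = 1"
proof -
  obtain p where "p \<in> H"
    using assms(5) in_components_nonempty unfolding holes_def by blast
  then have "p \<in> cbox (0, 0) (real M, real M)"
    using hole_subset_cbox[OF assms(2,5)] by blast
  moreover have "0 < M"
    using assms(1) by simp
  ultimately obtain c where c: "c \<in> square M" "p \<in> tile c"
    using cbox_subset_tiles by blast
  then have "c \<notin> C"
    using hole_eq_connected_component(2)[OF assms(5) \<open>p \<in> H\<close>] unfolding region_def by blast
  then have "c \<in> interior_sq M"
    using gap_cases[OF c(1) _ assms(3)] no_hole_meets_empty_corner[OF assms(2) _ _ assms(5)]
      \<open>p \<in> H\<close> c(2) by blast
  then have "H = open_cell c"
    using hole_at_interior_gap assms(4,5) \<open>p \<in> H\<close> c(2) \<open>c \<notin> C\<close> by blast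
  then have "{d. open_cell d \<subseteq> H} = {c}"
    using open_cell_subset_open_cell_iff by blast
  then show ?thesis
    unfolding hole_area_def by simp
qed

lemma unit_holes_iff_no_adjacent_gaps:
  assumes "M \<ge> 3" "C \<subseteq> square M" "D1 M \<subseteq> C"
  shows "(\<forall>H\<in>holes C. hole_area H = 1) \<longleftrightarrow> no_adjacent_gaps M C"
  using no_adjacent_gaps_if_unit_holes[OF assms(1,3)] unit_hole_if_no_adjacent_gaps[OF assms] by blast

subsection \<open>Decompression\<close>

definition even_space :: "space \<Rightarrow> bool" where
  "even_space c \<longleftrightarrow> even (fst c + snd c)"

definition double :: "space \<Rightarrow> space" where
  "double c = (2 * fst c, 2 * snd c)"

text \<open>The midpoint of \<open>double u\<close> and \<open>double v\<close>.\<close>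

definition between :: "space \<Rightarrow> space \<Rightarrow> space" where
  "between u v = (fst u + fst v, snd u + snd v)"

definition decompression :: "nat \<Rightarrow> space set \<Rightarrow> space set" where
  "decompression M C = {x \<in> square (2 * M - 1). \<not> even_space x} \<union> double ` C"

lemma adj_commute: "adj u v \<longleftrightarrow> adj v u"
  unfolding adj_def by auto

lemma adj_even_space: "adj u v \<Longrightarrow> even_space u \<longleftrightarrow> \<not> even_space v"
  unfolding adj_def even_space_def by auto

lemma even_space_double: "even_space (double c)"
  unfolding even_space_def double_def by simp

lemma not_even_space_between: "adj u v \<Longrightarrow> \<not> even_space (between u v)"
  unfolding adj_def between_def even_space_def by auto

lemma double_eq_double_iff: "double u = double v \<longleftrightarrow> u = v"
  unfolding double_def by (simp add: prod_eq_iff)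

lemma between_commute: "between u v = between v u"
  unfolding between_def by (simp add: add.commute)

lemma adj_double_between: "adj u v \<Longrightarrow> adj (double u) (between u v)"
  unfolding adj_def between_def double_def by auto

lemma adj_between_double: "adj u v \<Longrightarrow> adj (between u v) (double v)"
  using adj_double_between[of v u] by (simp add: adj_commute between_commute)

lemma common_neighbour_double:
  "adj (double u) e \<Longrightarrow> adj (double w) e \<Longrightarrow> u = w \<or> (adj u w \<and> e = between u w)"
  unfolding adj_def double_def between_def prod_eq_iff by auto

lemma adj_double_between_cases: "adj u v \<Longrightarrow> adj (double w) (between u v) \<Longrightarrow> w = u \<or> w = v"
  unfolding adj_def double_def between_def prod_eq_iff by auto

lemma between_eq_between:
  "adj u v \<Longrightarrow> adj u' v' \<Longrightarrow> between u v = between u' v' \<Longrightarrow> (u = u' \<and> v = v') \<or> (u = v' \<and> v = u')"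
  unfolding adj_def between_def prod_eq_iff by auto

lemma odd_space_eq_between:
  assumes "e \<in> square (2 * M - 1)" "\<not> even_space e"
  obtains u v where "u \<in> square M" "v \<in> square M" "adj u v" "e = between u v"
proof -
  obtain i j where e: "e = (i, j)"
    by (cases e)
  show ?thesis
  proof (cases "odd i")
    case True
    with assms show ?thesis
      by (intro that[of "((i - 1) div 2, j div 2)" "((i + 1) div 2, j div 2)"])
         (auto simp: e even_space_def square_def adj_def between_def elim!: oddE evenE)
  next
    case False
    with assms show ?thesis
      by (intro that[of "(i div 2, (j - 1) div 2)" "(i div 2, (j + 1) div 2)"])
         (auto simp: e even_space_def square_def adj_def between_def elim!: oddE evenE)
  qed
qed

lemma between_in_square:
  "u \<in> square M \<Longrightarrow> v \<in> square M \<Longrightarrow> adj u v \<Longrightarrow> between u v \<in> square (2 * M - 1)"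
  unfolding adj_def between_def square_def by auto

lemma double_in_decompression: "c \<in> C \<Longrightarrow> double c \<in> decompression M C"
  unfolding decompression_def by blast

lemma between_in_decompression:
  "u \<in> square M \<Longrightarrow> v \<in> square M \<Longrightarrow> adj u v \<Longrightarrow> between u v \<in> decompression M C"
  unfolding decompression_def using between_in_square not_even_space_between by blast

lemma even_space_in_decompression:
  "x \<in> decompression M C \<Longrightarrow> even_space x \<Longrightarrow> \<exists>c\<in>C. x = double c"
  unfolding decompression_def by auto

lemma decompression_edge_cases:
  assumes "x \<in> decompression M C" "adj x y" "double w = y \<or> adj (double w) y"
  shows "adj (double w) x \<or> (\<exists>w'\<in>C. x = double w' \<and> (w' = w \<or> adj w' w))"
proof (cases "double w = y")
  case True
  then show ?thesis
    using assms(2) adj_commute by blast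
next
  case False
  then have "adj (double w) y" "even_space x"
    using assms(2,3) adj_even_space even_space_double by blast+
  moreover obtain w' where "w' \<in> C" "x = double w'"
    using even_space_in_decompression assms(1) \<open>even_space x\<close> by blast
  ultimately show ?thesis
    using common_neighbour_double[of w' y w] assms(2) by blast
qed

lemma dual_connected_if_dual_connected_decompression:
  assumes "dual_connected (decompression M C)"
  shows "dual_connected C"
  unfolding dual_connected_def
proof (intro ballI)
  fix u v assume u: "u \<in> C" and v: "v \<in> C"
  define reached where
    "reached x \<longleftrightarrow> (\<forall>w\<in>C. double w = x \<or> adj (double w) x \<longrightarrow> (u, w) \<in> (dual_edges C)\<^sup>*)" for x
  have "(double u, double v) \<in> (dual_edges (decompression M C))\<^sup>*"
    using assms u v double_in_decompression unfolding dual_connected_def by blast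
  then have "reached (double v)"
  proof (induction rule: rtrancl_induct)
    case base
    have "w = u" if "double w = double u \<or> adj (double w) (double u)" for w
      using that adj_even_space even_space_double double_eq_double_iff by blast
    then show ?case
      unfolding reached_def by blast
  next
    case (step x y)
    have "x \<in> decompression M C" "adj x y"
      using step.hyps(2) unfolding dual_edges_def by auto
    have "(u, w) \<in> (dual_edges C)\<^sup>*" if "w \<in> C" "double w = y \<or> adj (double w) y" for w
      using decompression_edge_cases[OF \<open>x \<in> _\<close> \<open>adj x y\<close> that(2)]
    proof
      assume "adj (double w) x"
      with step.IH that(1) show ?thesis
        unfolding reached_def by blast
    next
      assume "\<exists>w'\<in>C. x = double w' \<and> (w' = w \<or> adj w' w)"
      then obtain w' where "w' \<in> C" "x = double w'" "w' = w \<or> adj w' w"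
        by blast
      moreover from this step.IH have "(u, w') \<in> (dual_edges C)\<^sup>*"
        unfolding reached_def by blast
      ultimately show ?thesis
        using that(1) unfolding dual_edges_def by (auto intro: rtrancl.rtrancl_into_rtrancl)
    qed
    then show ?case
      unfolding reached_def by blast
  qed
  with v show "(u, v) \<in> (dual_edges C)\<^sup>*"
    unfolding reached_def by blast
qed

lemma no_adjacent_gaps_if_dual_connected_decompression:
  assumes "dual_connected (decompression M C)" "C \<noteq> {}"
  shows "no_adjacent_gaps M C"
  unfolding no_adjacent_gaps_def
proof (intro ballI impI, rule ccontr)
  fix u v assume u: "u \<in> square M" and v: "v \<in> square M" and a: "adj u v"
    and gaps: "\<not> (u \<in> C \<or> v \<in> C)"
  obtain c where c: "c \<in> C"
    using assms(2) by blast
  have "(between u v, double c) \<in> (dual_edges (decompression M C))\<^sup>*"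
    using assms(1) between_in_decompression[OF u v a] double_in_decompression[OF c]
    unfolding dual_connected_def by blast
  moreover have "between u v \<noteq> double c"
    using not_even_space_between[OF a] even_space_double by metis
  ultimately obtain y where y: "y \<in> decompression M C" "adj (between u v) y"
    unfolding dual_edges_def by (metis (no_types, lifting) case_prodD converse_rtranclE mem_Collect_eq)
  then have "even_space y"
    using adj_even_space not_even_space_between[OF a] by blast
  then obtain w where "w \<in> C" "y = double w"
    using even_space_in_decompression y(1) by blast
  then have "w = u \<or> w = v"
    using adj_double_between_cases[OF a] y(2) adj_commute by blast
  with gaps \<open>w \<in> C\<close> show False
    by blast
qed

lemma double_rtrancl_decompression:
  assumes "C \<subseteq> square M" "(u, v) \<in> (dual_edges C)\<^sup>*"
  shows "(double u, double v) \<in> (dual_edges (decompression M C))\<^sup>*"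
  using assms(2)
proof (induction rule: rtrancl_induct)
  case base
  show ?case
    by simp
next
  case (step x y)
  let ?E = "dual_edges (decompression M C)"
  have xy: "x \<in> C" "y \<in> C" "adj x y"
    using step.hyps(2) unfolding dual_edges_def by auto
  then have "between x y \<in> decompression M C"
    using assms(1) between_in_decompression by blast
  then have "(double x, between x y) \<in> ?E" "(between x y, double y) \<in> ?E"
    using xy double_in_decompression adj_double_between adj_between_double
    unfolding dual_edges_def by blast+
  with step.IH show ?case
    by (meson rtrancl.rtrancl_into_rtrancl)
qed

lemma dual_connected_decompression:
  assumes "C \<subseteq> square M" "dual_connected C" "no_adjacent_gaps M C"
  shows "dual_connected (decompression M C)"
proof -
  let ?E = "dual_edges (decompression M C)"
  have near: "\<exists>c\<in>C. (x, double c) \<in> ?E\<^sup>* \<and> (double c, x) \<in> ?E\<^sup>*" if x: "x \<in> decompression M C" for x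
  proof (cases "even_space x")
    case True
    then show ?thesis
      using even_space_in_decompression x by blast
  next
    case False
    then have "x \<in> square (2 * M - 1)"
      using x even_space_double unfolding decompression_def by blast
    then obtain u v where uv: "u \<in> square M" "v \<in> square M" "adj u v" "x = between u v"
      using odd_space_eq_between False by blast
    then have "adj (double u) x" "adj (double v) x"
      using adj_double_between adj_between_double adj_commute by blast+
    moreover have "u \<in> C \<or> v \<in> C"
      using assms(3) uv unfolding no_adjacent_gaps_def by blast
    ultimately show ?thesis
      using x double_in_decompression adj_commute unfolding dual_edges_def by blast
  qed
  show ?thesis
    unfolding dual_connected_def
  proof (intro ballI)
    fix x y assume "x \<in> decompression M C" "y \<in> decompression M C"
    then obtain c d where "c \<in> C" "d \<in> C" "(x, double c) \<in> ?E\<^sup>*" "(double d, y) \<in> ?E\<^sup>*"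
      using near by blast
    moreover have "(double c, double d) \<in> ?E\<^sup>*"
      using double_rtrancl_decompression assms(1,2) \<open>c \<in> C\<close> \<open>d \<in> C\<close>
      unfolding dual_connected_def by blast
    ultimately show "(x, y) \<in> ?E\<^sup>*"
      by (meson rtrancl_trans)
  qed
qed

lemma dual_connected_decompression_iff:
  assumes "C \<subseteq> square M" "C \<noteq> {}"
  shows "dual_connected (decompression M C) \<longleftrightarrow> dual_connected C \<and> no_adjacent_gaps M C"
  using dual_connected_if_dual_connected_decompression dual_connected_decompression[OF assms(1)]
    no_adjacent_gaps_if_dual_connected_decompression[OF _ assms(2)] by blast

subsection \<open>Cycles\<close>

definition dual_cycle :: "space set \<Rightarrow> space list \<Rightarrow> bool" where
  "dual_cycle A xs \<longleftrightarrow> length xs \<ge> 3 \<and> distinct xs \<and> set xs \<subseteq> A \<and>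
     (\<forall>k < length xs. adj (xs ! k) (xs ! ((k + 1) mod length xs)))"

lemma has_dual_cycle_iff: "has_dual_cycle A \<longleftrightarrow> (\<exists>xs. dual_cycle A xs)"
  unfolding has_dual_cycle_def dual_cycle_def ..

lemma mod_Suc_neq:
  fixes k n :: nat
  assumes "2 \<le> n" "k < n"
  shows "(k + 1) mod n \<noteq> k"
proof
  assume "(k + 1) mod n = k"
  then have "n dvd (k + 1) - k"
    using assms(2) mod_eq_dvd_iff_nat[of k "k + 1" n] by simp
  with assms(1) show False
    by simp
qed

lemma mod_Suc_Suc_neq:
  fixes k n :: nat
  assumes "3 \<le> n" "k < n"
  shows "((k + 1) mod n + 1) mod n \<noteq> k"
proof
  assume "((k + 1) mod n + 1) mod n = k"
  moreover have "((k + 1) mod n + 1) mod n = (k + 2) mod n"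
    by (metis mod_add_left_eq add.assoc one_add_one)
  ultimately have "(k + 2) mod n = k mod n"
    using assms(2) by simp
  then have "n dvd (k + 2) - k"
    using mod_eq_dvd_iff_nat[of k "k + 2" n] by simp
  with assms(1) show False
    by (simp add: nat_dvd_not_less)
qed

lemma dual_cycle_rotate:
  assumes "dual_cycle A xs"
  shows "dual_cycle A (rotate m xs)"
  unfolding dual_cycle_def
proof (intro conjI allI impI)
  let ?L = "length xs"
  show "length (rotate m xs) \<ge> 3" "distinct (rotate m xs)" "set (rotate m xs) \<subseteq> A"
    using assms unfolding dual_cycle_def by simp_all
  fix k assume "k < length (rotate m xs)"
  then have "k < ?L"
    by simp
  then have "0 < ?L"
    by linarith
  with \<open>k < ?L\<close> have k: "k < ?L" "(k + 1) mod ?L < ?L" "(m + k) mod ?L < ?L"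
    by simp_all
  then have "adj (xs ! ((m + k) mod ?L)) (xs ! (((m + k) mod ?L + 1) mod ?L))"
    using assms unfolding dual_cycle_def by blast
  moreover have "((m + k) mod ?L + 1) mod ?L = (m + (k + 1) mod ?L) mod ?L"
    by (simp add: mod_simps ac_simps)
  ultimately show "adj (rotate m xs ! k) (rotate m xs ! ((k + 1) mod length (rotate m xs)))"
    using k by (simp only: nth_rotate length_rotate)
qed

lemma dual_cycle_even_space_nth:
  assumes "dual_cycle A ys" "m < length ys"
  shows "even_space (ys ! m) \<longleftrightarrow> (even m \<longleftrightarrow> even_space (ys ! 0))"
  using assms(2)
proof (induction m)
  case 0
  then show ?case
    by simp
next
  case (Suc m)
  then have "adj (ys ! m) (ys ! Suc m)"
    using assms(1) mod_less[OF Suc.prems] unfolding dual_cycle_def by (metis Suc_eq_plus1 Suc_lessD)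
  with Suc show ?case
    using adj_even_space by auto
qed

lemma dual_cycle_even_length:
  assumes "dual_cycle A ys"
  shows "even (length ys)"
proof -
  let ?L = "length ys"
  have "?L \<ge> 3"
    using assms unfolding dual_cycle_def by blast
  then have "?L - 1 < ?L" "?L - 1 + 1 = ?L"
    by simp_all
  then have "adj (ys ! (?L - 1)) (ys ! ((?L - 1 + 1) mod ?L))"
    using assms unfolding dual_cycle_def by blast
  then have "adj (ys ! (?L - 1)) (ys ! 0)"
    unfolding \<open>?L - 1 + 1 = ?L\<close> by simp
  then have "even_space (ys ! (?L - 1)) \<longleftrightarrow> \<not> even_space (ys ! 0)"
    by (rule adj_even_space)
  then show ?thesis
    using dual_cycle_even_space_nth[OF assms \<open>?L - 1 < ?L\<close>] \<open>?L \<ge> 3\<close> by auto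
qed

definition subdivision :: "space list \<Rightarrow> space list" where
  "subdivision xs = map (\<lambda>m. if even m then double (xs ! (m div 2))
      else between (xs ! (m div 2)) (xs ! ((m div 2 + 1) mod length xs))) [0..<2 * length xs]"

lemma length_subdivision [simp]: "length (subdivision xs) = 2 * length xs"
  by (simp add: subdivision_def)

lemma nth_subdivision:
  assumes "k < length xs"
  shows "subdivision xs ! (2 * k) = double (xs ! k)"
    "subdivision xs ! (2 * k + 1) = between (xs ! k) (xs ! ((k + 1) mod length xs))"
  using assms by (simp_all add: subdivision_def)

lemma less_double_cases:
  fixes m n :: nat
  assumes "m < 2 * n"
  obtains k where "k < n" "m = 2 * k" | k where "k < n" "m = 2 * k + 1"
proof (cases "even m")
  case True
  with assms that(1)[of "m div 2"] show ?thesis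
    by auto
next
  case False
  with assms that(2)[of "m div 2"] show ?thesis
    by (auto simp: odd_two_times_div_two_succ)
qed

lemma adj_nth_subdivision:
  assumes "dual_cycle C xs" "m < 2 * length xs"
  shows "adj (subdivision xs ! m) (subdivision xs ! ((m + 1) mod (2 * length xs)))"
proof -
  let ?n = "length xs"
  have adj: "adj (xs ! k) (xs ! ((k + 1) mod ?n))" if "k < ?n" for k
    using assms(1) that unfolding dual_cycle_def by blast
  have "0 < ?n"
    using assms(2) by linarith
  from assms(2) show ?thesis
  proof (cases rule: less_double_cases)
    case (1 k)
    then have "(m + 1) mod (2 * ?n) = 2 * k + 1"
      by simp
    with 1 show ?thesis
      using nth_subdivision adj_double_between adj by simp
  next
    case (2 k)
    then have "(m + 1) mod (2 * ?n) = 2 * ((k + 1) mod ?n)"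
      by (simp add: mult_mod_right)
    moreover have "(k + 1) mod ?n < ?n"
      using \<open>0 < ?n\<close> by simp
    ultimately show ?thesis
      using 2 nth_subdivision adj_between_double adj by simp
  qed
qed

lemma dual_cycle_between_inj:
  assumes "dual_cycle C xs" "a < length xs" "b < length xs"
    "between (xs ! a) (xs ! ((a + 1) mod length xs)) = between (xs ! b) (xs ! ((b + 1) mod length xs))"
  shows "a = b"
proof -
  let ?n = "length xs"
  let ?succ = "\<lambda>k. (k + 1) mod ?n"
  have n: "?n \<ge> 3" "distinct xs" and adj: "\<And>k. k < ?n \<Longrightarrow> adj (xs ! k) (xs ! ?succ k)"
    using assms(1) unfolding dual_cycle_def by blast+
  have "xs \<noteq> []"
    using n(1) by auto
  then have succ: "?succ k < ?n" for k
    by simp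
  have index: "i = j" if "i < ?n" "j < ?n" "xs ! i = xs ! j" for i j
    using that n(2) nth_eq_iff_index_eq by blast
  show ?thesis
    using between_eq_between[OF adj adj assms(4)] index[of a b] index[of a "?succ b"]
      index[of b "?succ a"] mod_Suc_Suc_neq[OF n(1) assms(2)] succ assms(2,3) by metis
qed

lemma distinct_subdivision:
  assumes "dual_cycle C xs"
  shows "distinct (subdivision xs)"
proof -
  let ?n = "length xs" and ?ys = "subdivision xs"
  let ?succ = "\<lambda>k. (k + 1) mod ?n"
  have "distinct xs" and adj: "\<And>k. k < ?n \<Longrightarrow> adj (xs ! k) (xs ! ?succ k)"
    using assms unfolding dual_cycle_def by blast+
  have index: "a = b" if "a < ?n" "b < ?n" "xs ! a = xs ! b" for a b
    using that \<open>distinct xs\<close> nth_eq_iff_index_eq by blast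
  have "m1 = m2" if m: "m1 < 2 * ?n" "m2 < 2 * ?n" "?ys ! m1 = ?ys ! m2" for m1 m2
    using m(1)
  proof (cases rule: less_double_cases)
    case (1 k1)
    from m(2) show ?thesis
    proof (cases rule: less_double_cases)
      case (1 k2)
      with \<open>k1 < ?n\<close> \<open>m1 = 2 * k1\<close> m(3) show ?thesis
        using index by (simp add: nth_subdivision double_eq_double_iff)
    next
      case (2 k2)
      with \<open>k1 < ?n\<close> \<open>m1 = 2 * k1\<close> m(3) show ?thesis
        using even_space_double not_even_space_between adj by (metis nth_subdivision)
    qed
  next
    case (2 k1)
    from m(2) show ?thesis
    proof (cases rule: less_double_cases)
      case (1 k2)
      with \<open>k1 < ?n\<close> \<open>m1 = 2 * k1 + 1\<close> m(3) show ?thesis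
        using even_space_double not_even_space_between adj by (metis nth_subdivision)
    next
      case (2 k2)
      from m(3) have "between (xs ! k1) (xs ! ?succ k1) = between (xs ! k2) (xs ! ?succ k2)"
        unfolding \<open>m1 = 2 * k1 + 1\<close> \<open>m2 = 2 * k2 + 1\<close>
          nth_subdivision(2)[OF \<open>k1 < ?n\<close>] nth_subdivision(2)[OF \<open>k2 < ?n\<close>] .
      with \<open>k1 < ?n\<close> \<open>k2 < ?n\<close> show ?thesis
        using dual_cycle_between_inj[OF assms] \<open>m1 = 2 * k1 + 1\<close> \<open>m2 = 2 * k2 + 1\<close> by simp
    qed
  qed
  then show ?thesis
    by (auto simp: distinct_conv_nth)
qed

lemma set_subdivision:
  assumes "C \<subseteq> square M" "dual_cycle C xs"
  shows "set (subdivision xs) \<subseteq> decompression M C"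
proof
  fix y assume "y \<in> set (subdivision xs)"
  then obtain m where m: "m < 2 * length xs" "y = subdivision xs ! m"
    by (auto simp: in_set_conv_nth)
  have xs: "set xs \<subseteq> C" "\<And>k. k < length xs \<Longrightarrow> adj (xs ! k) (xs ! ((k + 1) mod length xs))"
    using assms(2) unfolding dual_cycle_def by blast+
  have "xs \<noteq> []"
    using m(1) by auto
  then have C: "xs ! k \<in> C" "xs ! ((k + 1) mod length xs) \<in> C" if "k < length xs" for k
    using that xs(1) by auto
  from m(1) show "y \<in> decompression M C"
  proof (cases rule: less_double_cases)
    case (1 k)
    then show ?thesis
      using C m(2) by (simp add: nth_subdivision double_in_decompression)
  next
    case (2 k)
    then have "y = between (xs ! k) (xs ! ((k + 1) mod length xs))"
      unfolding m(2) using nth_subdivision(2) by blast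
    with 2 show ?thesis
      using C assms(1) xs(2) between_in_decompression by blast
  qed
qed

lemma dual_cycle_subdivision:
  assumes "C \<subseteq> square M" "dual_cycle C xs"
  shows "dual_cycle (decompression M C) (subdivision xs)"
  unfolding dual_cycle_def
proof (intro conjI allI impI)
  show "length (subdivision xs) \<ge> 3"
    using assms(2) unfolding dual_cycle_def by simp
  show "distinct (subdivision xs)"
    by (rule distinct_subdivision[OF assms(2)])
  show "set (subdivision xs) \<subseteq> decompression M C"
    by (rule set_subdivision[OF assms])
  fix m assume "m < length (subdivision xs)"
  then show "adj (subdivision xs ! m) (subdivision xs ! ((m + 1) mod length (subdivision xs)))"
    using adj_nth_subdivision[OF assms(2)] by simp
qed


lemma dual_cycle_nodes:
  assumes "dual_cycle (decompression M C) ys" "even_space (ys ! 0)" "length ys = 2 * n"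
  obtains z where "\<And>k. k < n \<Longrightarrow> z k \<in> C \<and> ys ! (2 * k) = double (z k)" "inj_on z {..<n}"
proof -
  have "\<exists>c\<in>C. ys ! (2 * k) = double c" if "k < n" for k
  proof -
    have "2 * k < length ys"
      using that assms(3) by simp
    then have "ys ! (2 * k) \<in> decompression M C" "even_space (ys ! (2 * k))"
      using assms(1,2) dual_cycle_even_space_nth[OF assms(1)] unfolding dual_cycle_def
      by (auto dest: nth_mem)
    then show ?thesis
      by (rule even_space_in_decompression)
  qed
  then obtain z where z: "\<And>k. k < n \<Longrightarrow> z k \<in> C \<and> ys ! (2 * k) = double (z k)"
    by metis
  moreover have "inj_on z {..<n}"
  proof (rule inj_onI)
    fix a b assume "a \<in> {..<n}" "b \<in> {..<n}" "z a = z b"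
    then have "ys ! (2 * a) = ys ! (2 * b)" "2 * a < length ys" "2 * b < length ys"
      using z assms(3) by auto
    then show "a = b"
      using assms(1) nth_eq_iff_index_eq unfolding dual_cycle_def by fastforce
  qed
  ultimately show thesis
    using that by blast
qed

lemma dual_cycle_link:
  assumes "dual_cycle A ys" "length ys = 2 * n" "k < n"
    "ys ! (2 * k) = double u" "ys ! (2 * ((k + 1) mod n)) = double w" "u \<noteq> w"
  shows "adj u w \<and> ys ! (2 * k + 1) = between u w"
proof -
  let ?L = "length ys"
  have ad: "adj (ys ! m) (ys ! ((m + 1) mod ?L))" if "m < ?L" for m
    using assms(1) that unfolding dual_cycle_def by blast
  have "adj (double u) (ys ! (2 * k + 1))"
    using ad[of "2 * k"] assms(2-4) by simp
  moreover have "(2 * k + 1 + 1) mod ?L = 2 * ((k + 1) mod n)"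
    unfolding assms(2) by (simp add: mult_mod_right)
  then have "adj (ys ! (2 * k + 1)) (double w)"
    using ad[of "2 * k + 1"] assms(2,3,5) by simp
  ultimately show ?thesis
    using common_neighbour_double assms(6) adj_commute by blast
qed

lemma dual_cycle_contraction:
  assumes "dual_cycle (decompression M C) ys" "even_space (ys ! 0)"
  shows "has_dual_cycle C"
proof -
  let ?L = "length ys"
  obtain n where L: "?L = 2 * n"
    using dual_cycle_even_length[OF assms(1)] by (auto elim: evenE)
  have n2: "n \<ge> 2" and distinct: "distinct ys"
    using assms(1) L unfolding dual_cycle_def by auto
  obtain z where z: "\<And>k. k < n \<Longrightarrow> z k \<in> C \<and> ys ! (2 * k) = double (z k)"
    and inj: "inj_on z {..<n}"
    using dual_cycle_nodes[OF assms L] by blast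
  let ?succ = "\<lambda>k. (k + 1) mod n"
  have succ: "?succ k < n" for k
    using n2 by simp
  have link: "adj (z k) (z (?succ k)) \<and> ys ! (2 * k + 1) = between (z k) (z (?succ k))"
    if "k < n" for k
  proof (rule dual_cycle_link[OF assms(1) L that])
    show "ys ! (2 * k) = double (z k)" "ys ! (2 * ?succ k) = double (z (?succ k))"
      using z that succ by blast+
    show "z k \<noteq> z (?succ k)"
      using inj_onD[OF inj, of k "?succ k"] mod_Suc_neq[OF n2 that] succ[of k] that by auto
  qed
  have "n \<ge> 3"
  proof (rule ccontr)
    assume "\<not> n \<ge> 3"
    then have "n = 2"
      using n2 by simp
    then have "ys ! 1 = ys ! 3"
      using link[of 0] link[of 1] between_commute by simp
    with distinct \<open>n = 2\<close> L show False
      by (simp add: nth_eq_iff_index_eq)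
  qed
  then have "dual_cycle C (map z [0..<n])"
    unfolding dual_cycle_def using z link inj by (auto simp: distinct_map atLeast0LessThan)
  then show ?thesis
    unfolding has_dual_cycle_iff by blast
qed

lemma has_dual_cycle_decompression_iff:
  assumes "C \<subseteq> square M"
  shows "has_dual_cycle (decompression M C) \<longleftrightarrow> has_dual_cycle C"
proof
  assume "has_dual_cycle (decompression M C)"
  then obtain ys where ys: "dual_cycle (decompression M C) ys"
    unfolding has_dual_cycle_iff by blast
  then have "1 < length ys" "adj (ys ! 0) (ys ! 1)"
    unfolding dual_cycle_def by (auto dest: spec[of _ 0])
  define r where "r = (if even_space (ys ! 0) then 0 else 1 :: nat)"
  have "0 < length ys" "r < length ys"
    using \<open>1 < length ys\<close> unfolding r_def by auto
  then have "rotate r ys ! 0 = ys ! r"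
    using nth_rotate[of 0 ys r] by simp
  then have "even_space (rotate r ys ! 0)"
    using adj_even_space[OF \<open>adj (ys ! 0) (ys ! 1)\<close>] unfolding r_def by auto
  then show "has_dual_cycle C"
    using dual_cycle_contraction dual_cycle_rotate[OF ys] by blast
next
  assume "has_dual_cycle C"
  then show "has_dual_cycle (decompression M C)"
    using dual_cycle_subdivision[OF assms] unfolding has_dual_cycle_iff by blast
qed

subsection \<open>Compressible arrangements\<close>

lemma finite_square: "finite (square M)"
proof -
  have "square M = {..<M} \<times> {..<M}"
    unfolding square_def by auto
  then show ?thesis
    by simp
qed

lemma compressibleD:
  assumes "compressible N A"
  shows "A \<subseteq> square N" "D1 N \<subseteq> A"
    "\<And>i j. (i, j) \<in> interior_sq N \<Longrightarrow> odd (i + j) \<Longrightarrow> (i, j) \<in> A"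
    "\<And>i j. (i, j) \<in> interior_sq N \<Longrightarrow> odd i \<Longrightarrow> odd j \<Longrightarrow> (i, j) \<notin> A"
  using assms unfolding compressible_def is_arrangement_def by auto

lemma double_in_D1:
  assumes "c \<in> D1 M"
  shows "double c \<in> D1 (2 * M - 1)"
  using assms unfolding D1_def ring_def corners_def square_def double_def by auto

lemma compression_eq:
  assumes "compressible N A" "N = 2 * M - 1" "M \<ge> 1"
  shows "compression N A = {c \<in> square M. double c \<in> A}"
proof -
  have M: "(N + 1) div 2 = M"
    using assms(2,3) by simp
  have sq: "D1 M \<subseteq> square M" "corners M \<subseteq> square M" "interior_sq M \<subseteq> square M"
    using assms(3) unfolding D1_def ring_def corners_def interior_sq_def square_def by auto
  have D1: "double c \<in> A" if "c \<in> D1 M" for c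
    using double_in_D1[OF that] compressibleD(2)[OF assms(1)] assms(2) by blast
  show ?thesis
  proof (intro set_eqI iffI)
    fix c assume "c \<in> compression N A"
    then have "c \<in> D1 M \<or> c \<in> corners M \<and> double c \<in> A \<or> c \<in> interior_sq M \<and> double c \<in> A"
      unfolding compression_def M Let_def double_def by (cases c) auto
    with sq D1 show "c \<in> {c \<in> square M. double c \<in> A}"
      by blast
  next
    fix c assume c: "c \<in> {c \<in> square M. double c \<in> A}"
    then have "c \<in> D1 M \<or> c \<in> corners M \<or> c \<in> interior_sq M"
      using interior_sq_if_not_in_ring unfolding D1_def by blast
    with c show "c \<in> compression N A"
      unfolding compression_def M Let_def double_def by (cases c) auto
  qed
qed

lemma compressible_subset_decompression:
  assumes "odd N" "compressible N A" "N = 2 * M - 1" "M \<ge> 1"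
  shows "A \<subseteq> decompression M (compression N A)"
proof
  fix x assume "x \<in> A"
  obtain i j where x: "x = (i, j)"
    by (cases x)
  have "x \<in> square N"
    using \<open>x \<in> A\<close> compressibleD(1)[OF assms(2)] by blast
  show "x \<in> decompression M (compression N A)"
  proof (cases "even i \<and> even j")
    case True
    then have "x = double (i div 2, j div 2)" "(i div 2, j div 2) \<in> square M"
      using \<open>x \<in> square N\<close> assms(3) unfolding x double_def square_def by auto
    with \<open>x \<in> A\<close> show ?thesis
      unfolding decompression_def compression_eq[OF assms(2-4)] by auto
  next
    case False
    have "\<not> (odd i \<and> odd j)"
    proof
      assume odd: "odd i \<and> odd j"
      moreover have "even (N - 1)"
        using assms(1) by simp
      ultimately have "i \<noteq> N - 1" "j \<noteq> N - 1" "0 < i" "0 < j"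
        by (auto intro: odd_pos)
      then have "(i, j) \<in> interior_sq N"
        using \<open>x \<in> square N\<close> unfolding x square_def interior_sq_def by auto
      with odd \<open>x \<in> A\<close> show False
        unfolding x using compressibleD(4)[OF assms(2)] by blast
    qed
    with False \<open>x \<in> square N\<close> show ?thesis
      unfolding decompression_def x even_space_def assms(3)[symmetric] by auto
  qed
qed

lemma decompression_subset_compressible:
  assumes "odd N" "compressible N A" "N = 2 * M - 1" "M \<ge> 1"
  shows "decompression M (compression N A) \<subseteq> A"
proof
  fix x assume x: "x \<in> decompression M (compression N A)"
  show "x \<in> A"
  proof (cases "x \<in> double ` compression N A")
    case True
    then show ?thesis
      unfolding compression_eq[OF assms(2-4)] by auto
  next
    case False
    with x have "x \<in> square N" "odd (fst x + snd x)"
      unfolding decompression_def even_space_def assms(3)[symmetric] by auto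
    have "x \<notin> corners N"
      using \<open>odd (fst x + snd x)\<close> assms(1) unfolding corners_def by (auto intro: odd_pos)
    show ?thesis
    proof (cases "x \<in> ring N")
      case True
      then show ?thesis
        using compressibleD(2)[OF assms(2)] \<open>x \<notin> corners N\<close> unfolding D1_def by blast
    next
      case False
      then have "x \<in> interior_sq N"
        using interior_sq_if_not_in_ring \<open>x \<in> square N\<close> by blast
      then show ?thesis
        using compressibleD(3)[OF assms(2), of "fst x" "snd x"] \<open>odd (fst x + snd x)\<close> by simp
    qed
  qed
qed

lemma zero_one_in_D1: "M \<ge> 3 \<Longrightarrow> (0, 1) \<in> D1 M"
  unfolding D1_def ring_def corners_def square_def by auto

theorem lemma8:
  fixes N :: nat and A :: "(nat \<times> nat) set"
  assumes "odd N" and "N \<ge> 5" and "compressible N A"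
  shows "acyclic_polyomino A \<longleftrightarrow>
         (acyclic_polyomino (compression N A) \<and>
          (\<forall>H \<in> holes (compression N A). hole_area H = 1))"
proof -
  define M where "M = (N + 1) div 2"
  define C where "C = compression N A"
  have M: "M \<ge> 3" "N = 2 * M - 1"
    using assms(1,2) unfolding M_def by (auto elim: oddE)
  have A: "A = decompression M C"
    unfolding C_def using compressible_subset_decompression[OF assms(1,3) M(2)]
      decompression_subset_compressible[OF assms(1,3) M(2)] M(1) by (simp add: subset_antisym)
  have C: "C \<subseteq> square M" "D1 M \<subseteq> C"
    using compression_eq[OF assms(3) M(2)] M(1)
    unfolding C_def compression_def M_def[symmetric] Let_def by auto
  have "finite A" "A \<noteq> {}"
    using compressibleD(1,2)[OF assms(3)] finite_subset[OF _ finite_square] zero_one_in_D1[of N]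
      assms(2) by auto
  moreover have "finite C" "C \<noteq> {}"
    using C finite_subset[OF _ finite_square] zero_one_in_D1[OF M(1)] by auto
  ultimately have "acyclic_polyomino A \<longleftrightarrow> dual_connected A \<and> \<not> has_dual_cycle A"
    using acyclic_polyomino_iff_acyclic_arr unfolding acyclic_arr_def by blast
  also have "\<dots> \<longleftrightarrow> (dual_connected C \<and> no_adjacent_gaps M C) \<and> \<not> has_dual_cycle C"
    unfolding A using dual_connected_decompression_iff[OF C(1) \<open>C \<noteq> {}\<close>]
      has_dual_cycle_decompression_iff[OF C(1)] by simp
  also have "\<dots> \<longleftrightarrow> acyclic_polyomino C \<and> (\<forall>H\<in>holes C. hole_area H = 1)"
    using acyclic_polyomino_iff_acyclic_arr[OF \<open>finite C\<close> \<open>C \<noteq> {}\<close>]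
      unit_holes_iff_no_adjacent_gaps[OF M(1) C] unfolding acyclic_arr_def by blast
  finally show ?thesis
    unfolding C_def .
qed

end
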